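(* Let $G$ and $H$ be nontrivial finite connected simple graphs and let $\ell\geq 2$ be an integer. (1) If $S$ is an $\{\ell\}$-resolving set of $G\Box H$, then the projection of $S$ onto $G$ is an $\{\ell\}$-resolving set of $G$ and the projection of $S$ onto $H$ is an $\{\ell\}$-resolving set of $H$. (2) If $S$ is an $\{\ell\}$-resolving set of $G$ and $S'$ is an $\ell$-solid-resolving set of $H$, then $S\times S'=\{ss': s\in S, s'\in S'\}$ is an $\{\ell\}$-resolving set of $G\Box H$; symmetrically, if $S$ is an $\{\ell\}$-resolving set of $H$ and $S'$ is an $\ell$-solid-resolving set of $G$, then $S'\times S$ is an $\{\ell\}$-resolving set of $G\Box H$. (3) $\max\{\beta_\ell(G),\beta_\ell(H)\}\leq\beta_\ell(G\Box H)\leq\min\{\beta_\ell(G)\cdot\beta_\ell^s(H),\ \beta_\ell^s(G)\cdot\beta_\ell(H)\}$.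
   Context: The Cartesian product $G\Box H$ has vertex set $\{av: a\in V(G), v\in V(H)\}$, with distinct $av,bu$ adjacent iff ($a=b$ and $uv\in E(H)$) or ($ab\in E(G)$ and $u=v$). The projection of $X\subseteq V(G\Box H)$ onto $G$ is $\{x_1: x_1x_2\in X\}$, and onto $H$ is $\{x_2: x_1x_2\in X\}$. For a graph, $d$ is the shortest-path distance, $d(s,X)=\min_{x\in X}d(s,x)$ for nonempty $X$, and $\mathcal{D}_S(X)=(d(s_1,X),\dots,d(s_k,X))$ for $S=\{s_1,\dots,s_k\}$. $S$ is an $\{\ell\}$-resolving set if $\mathcal{D}_S(X)\neq\mathcal{D}_S(Y)$ for all distinct nonempty vertex sets $X,Y$ with $|X|,|Y|\leq\ell$; $S$ is an $\ell$-solid-resolving set if $\mathcal{D}_S(X)\neq\mathcal{D}_S(Y)$ for all distinct nonempty vertex sets $X,Y$ with $|X|\leq\ell$ ($Y$ arbitrary). $\beta_\ell$ and $\beta_\ell^s$ are the minimum sizes of such sets. *)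

theory Defs
  imports Main
begin

definition simple_graph :: "'a set \<Rightarrow> ('a \<Rightarrow> 'a \<Rightarrow> bool) \<Rightarrow> bool" where
  "simple_graph V E \<longleftrightarrow> finite V \<and> (\<forall>x y. E x y \<longrightarrow> x \<in> V \<and> y \<in> V)
     \<and> (\<forall>x y. E x y \<longrightarrow> E y x) \<and> (\<forall>x. \<not> E x x)"

definition connected_graph :: "'a set \<Rightarrow> ('a \<Rightarrow> 'a \<Rightarrow> bool) \<Rightarrow> bool" where
  "connected_graph V E \<longleftrightarrow> (\<forall>u\<in>V. \<forall>v\<in>V. \<exists>n. (E ^^ n) u v)"

definition nontrivial_graph :: "'a set \<Rightarrow> bool" where
  "nontrivial_graph V \<longleftrightarrow> card V \<ge> 2"

definition gdist :: "('a \<Rightarrow> 'a \<Rightarrow> bool) \<Rightarrow> 'a \<Rightarrow> 'a \<Rightarrow> nat" where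
  "gdist E u v = (LEAST n. (E ^^ n) u v)"

definition setdist :: "('a \<Rightarrow> 'a \<Rightarrow> bool) \<Rightarrow> 'a \<Rightarrow> 'a set \<Rightarrow> nat" where
  "setdist E s X = Min (gdist E s ` X)"

text \<open>D_S(X) = D_S(Y) iff every s in S has the same distance to X and to Y.\<close>
definition l_resolving :: "'a set \<Rightarrow> ('a \<Rightarrow> 'a \<Rightarrow> bool) \<Rightarrow> nat \<Rightarrow> 'a set \<Rightarrow> bool" where
  "l_resolving V E l S \<longleftrightarrow> S \<subseteq> V \<and>
     (\<forall>X Y. X \<subseteq> V \<and> Y \<subseteq> V \<and> X \<noteq> {} \<and> Y \<noteq> {} \<and> card X \<le> l \<and> card Y \<le> l \<and> X \<noteq> Y
        \<longrightarrow> (\<exists>s\<in>S. setdist E s X \<noteq> setdist E s Y))"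

definition l_solid_resolving :: "'a set \<Rightarrow> ('a \<Rightarrow> 'a \<Rightarrow> bool) \<Rightarrow> nat \<Rightarrow> 'a set \<Rightarrow> bool" where
  "l_solid_resolving V E l S \<longleftrightarrow> S \<subseteq> V \<and>
     (\<forall>X Y. X \<subseteq> V \<and> Y \<subseteq> V \<and> X \<noteq> {} \<and> Y \<noteq> {} \<and> card X \<le> l \<and> X \<noteq> Y
        \<longrightarrow> (\<exists>s\<in>S. setdist E s X \<noteq> setdist E s Y))"

definition beta :: "'a set \<Rightarrow> ('a \<Rightarrow> 'a \<Rightarrow> bool) \<Rightarrow> nat \<Rightarrow> nat" where
  "beta V E l = (LEAST k. \<exists>S. l_resolving V E l S \<and> card S = k)"

definition beta_s :: "'a set \<Rightarrow> ('a \<Rightarrow> 'a \<Rightarrow> bool) \<Rightarrow> nat \<Rightarrow> nat" where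
  "beta_s V E l = (LEAST k. \<exists>S. l_solid_resolving V E l S \<and> card S = k)"

text \<open>Cartesian product G \<box> H; vertex ab is the pair (a, b).\<close>
definition cart_V :: "'a set \<Rightarrow> 'b set \<Rightarrow> ('a \<times> 'b) set" where
  "cart_V VG VH = VG \<times> VH"

definition cart_E :: "('a \<Rightarrow> 'a \<Rightarrow> bool) \<Rightarrow> ('b \<Rightarrow> 'b \<Rightarrow> bool) \<Rightarrow> 'a \<times> 'b \<Rightarrow> 'a \<times> 'b \<Rightarrow> bool" where
  "cart_E EG EH = (\<lambda>(a, u) (b, v). (a = b \<and> EH u v) \<or> (EG a b \<and> u = v))"

end

theory Submission
  imports Defs
begin

(* Distances in G \<box> H add up: d((a,u),(b,v)) = d(a,b) + d(u,v).  On a fibre X \<times> {v} a landmark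
   (s,s') therefore sees d(s,X) shifted by the constant d(s',v), which gives the projection
   statements.  For S \<times> S' and X \<noteq> Y of size at most l one finds, possibly after exchanging X and
   Y, a vertex (a,b) \<in> X - Y and s \<in> S such that a is strictly nearer to s than every other first
   coordinate of Y: either S distinguishes fst X from fst Y, or fst X = fst Y and S distinguishes
   fst X from fst X - {a}.  Applying S' to Z = snd Y - {b} and insert b Z, which may have l + 1
   elements (hence solidity), gives s' \<in> S' such that b is strictly nearer to s' than every
   vertex of Z.  Then (a,b) is strictly nearer to (s,s') than every vertex of Y, so (s,s')
   distinguishes X from Y. *)

lemma relpowp_map:
  assumes "\<And>x y. R x y \<Longrightarrow> R' (f x) (f y)" and "(R ^^ n) x y"
  shows "(R' ^^ n) (f x) (f y)"
  using assms(2)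
proof (induction n arbitrary: y)
  case 0
  then show ?case by simp
next
  case (Suc n)
  then obtain z where "(R ^^ n) x z" "R z y" by (auto elim: relpowp_Suc_E)
  with Suc.IH assms(1) show ?case by (blast intro: relpowp_Suc_I)
qed

lemma cart_E_walk:
  assumes "(EG ^^ m) a b" and "(EH ^^ k) u v"
  shows "(cart_E EG EH ^^ (m + k)) (a, u) (b, v)"
proof -
  have "(cart_E EG EH ^^ m) (a, u) (b, u)"
    by (rule relpowp_map[where f = "\<lambda>x. (x, u)", OF _ assms(1)]) (simp add: cart_E_def)
  moreover have "(cart_E EG EH ^^ k) (b, u) (b, v)"
    by (rule relpowp_map[where f = "\<lambda>y. (b, y)", OF _ assms(2)]) (simp add: cart_E_def)
  ultimately show ?thesis by (rule relpowp_trans)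
qed

lemma cart_E_walk_split:
  assumes "(cart_E EG EH ^^ n) p q"
  shows "\<exists>m k. m + k = n \<and> (EG ^^ m) (fst p) (fst q) \<and> (EH ^^ k) (snd p) (snd q)"
  using assms
proof (induction n arbitrary: q)
  case 0
  then show ?case by auto
next
  case (Suc n)
  then obtain r where r: "(cart_E EG EH ^^ n) p r" "cart_E EG EH r q"
    by (auto elim: relpowp_Suc_E)
  from Suc.IH[OF r(1)] obtain m k where
    mk: "m + k = n" "(EG ^^ m) (fst p) (fst r)" "(EH ^^ k) (snd p) (snd r)" by blast
  from r(2) have "fst r = fst q \<and> EH (snd r) (snd q) \<or> EG (fst r) (fst q) \<and> snd r = snd q"
    by (cases r; cases q) (simp add: cart_E_def)
  then show ?case
  proof
    assume step: "fst r = fst q \<and> EH (snd r) (snd q)"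
    then have "(EH ^^ Suc k) (snd p) (snd q)" using mk(3) by (blast intro: relpowp_Suc_I)
    with mk step show ?thesis by (intro exI[of _ m] exI[of _ "Suc k"]) simp
  next
    assume step: "EG (fst r) (fst q) \<and> snd r = snd q"
    then have "(EG ^^ Suc m) (fst p) (fst q)" using mk(2) by (blast intro: relpowp_Suc_I)
    with mk step show ?thesis by (intro exI[of _ "Suc m"] exI[of _ k]) simp
  qed
qed

lemma gdist_le: "(E ^^ n) u v \<Longrightarrow> gdist E u v \<le> n"
  unfolding gdist_def by (rule Least_le)

lemma relpowp_gdist: "(E ^^ n) u v \<Longrightarrow> (E ^^ gdist E u v) u v"
  unfolding gdist_def by (rule LeastI)

lemma connected_graph_relpowp_gdist:
  assumes "connected_graph V E" and "u \<in> V" and "v \<in> V"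
  shows "(E ^^ gdist E u v) u v"
proof -
  obtain n where "(E ^^ n) u v" using assms unfolding connected_graph_def by blast
  then show ?thesis by (rule relpowp_gdist)
qed

lemma gdist_cart_E:
  assumes "connected_graph VG EG" and "connected_graph VH EH"
    and "a \<in> VG" and "b \<in> VG" and "u \<in> VH" and "v \<in> VH"
  shows "gdist (cart_E EG EH) (a, u) (b, v) = gdist EG a b + gdist EH u v"
proof (rule antisym)
  have walk: "(cart_E EG EH ^^ (gdist EG a b + gdist EH u v)) (a, u) (b, v)"
    using cart_E_walk connected_graph_relpowp_gdist[OF assms(1,3,4)]
      connected_graph_relpowp_gdist[OF assms(2,5,6)] .
  then show "gdist (cart_E EG EH) (a, u) (b, v) \<le> gdist EG a b + gdist EH u v"
    by (rule gdist_le)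
  from cart_E_walk_split[OF relpowp_gdist[OF walk]] obtain m k where
    mk: "m + k = gdist (cart_E EG EH) (a, u) (b, v)" "(EG ^^ m) a b" "(EH ^^ k) u v" by auto
  have "gdist EG a b \<le> m" using mk(2) by (rule gdist_le)
  moreover have "gdist EH u v \<le> k" using mk(3) by (rule gdist_le)
  ultimately show "gdist EG a b + gdist EH u v \<le> gdist (cart_E EG EH) (a, u) (b, v)"
    using mk(1) by linarith
qed

lemma gdist_eq_0_iff:
  assumes "connected_graph V E" and "u \<in> V" and "v \<in> V"
  shows "gdist E u v = 0 \<longleftrightarrow> u = v"
proof
  assume "gdist E u v = 0"
  then show "u = v" using connected_graph_relpowp_gdist[OF assms] by simp
next
  assume "u = v"
  then show "gdist E u v = 0" unfolding gdist_def by (intro Least_eq_0) simp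
qed

lemma cart_E_swap: "cart_E EH EG (prod.swap p) (prod.swap q) = cart_E EG EH p q"
  by (cases p; cases q) (auto simp: cart_E_def)

lemma gdist_cart_E_swap:
  "gdist (cart_E EH EG) (prod.swap p) (prod.swap q) = gdist (cart_E EG EH) p q"
proof -
  have "(cart_E EH EG ^^ n) (prod.swap p) (prod.swap q) \<longleftrightarrow> (cart_E EG EH ^^ n) p q" for n
  proof
    assume "(cart_E EH EG ^^ n) (prod.swap p) (prod.swap q)"
    from relpowp_map[where f = prod.swap, OF _ this] show "(cart_E EG EH ^^ n) p q"
      using cart_E_swap[of EG EH] by simp
  next
    assume "(cart_E EG EH ^^ n) p q"
    from relpowp_map[where f = prod.swap, OF _ this]
    show "(cart_E EH EG ^^ n) (prod.swap p) (prod.swap q)"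
      using cart_E_swap[of EH EG] by simp
  qed
  then show ?thesis by (simp add: gdist_def)
qed

lemma l_resolvingD:
  assumes "l_resolving V E l S"
    and "X \<subseteq> V" and "Y \<subseteq> V" and "X \<noteq> {}" and "Y \<noteq> {}"
    and "card X \<le> l" and "card Y \<le> l" and "X \<noteq> Y"
  shows "\<exists>s\<in>S. setdist E s X \<noteq> setdist E s Y"
  using assms unfolding l_resolving_def by blast

lemma l_solid_resolvingD:
  assumes "l_solid_resolving V E l S"
    and "X \<subseteq> V" and "Y \<subseteq> V" and "X \<noteq> {}" and "Y \<noteq> {}" and "card X \<le> l" and "X \<noteq> Y"
  shows "\<exists>s\<in>S. setdist E s X \<noteq> setdist E s Y"
  using assms unfolding l_solid_resolving_def by blast

lemma l_solid_resolving_imp_l_resolving: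
  "l_solid_resolving V E l S \<Longrightarrow> l_resolving V E l S"
  unfolding l_solid_resolving_def l_resolving_def by blast

lemma l_resolving_nonempty:
  assumes "l_resolving V E l S" and "card V \<ge> 2" and "l \<ge> 1"
  shows "S \<noteq> {}"
proof -
  have "finite V" using assms(2) by (intro card_ge_0_finite) simp
  then have "\<not> (\<forall>u\<in>V. \<forall>v\<in>V. u = v)" using assms(2) card_le_Suc0_iff_eq by fastforce
  then obtain u v where "u \<in> V" "v \<in> V" "u \<noteq> v" by blast
  with assms(3) have "\<exists>s\<in>S. setdist E s {u} \<noteq> setdist E s {v}"
    by (intro l_resolvingD[OF assms(1)]) auto
  then show ?thesis by blast
qed

lemma setdist_cart_E:
  assumes "connected_graph VG EG" and "connected_graph VH EH"
    and "s \<in> VG" and "s' \<in> VH" and "X \<subseteq> VG \<times> VH"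
  shows "setdist (cart_E EG EH) (s, s') X = Min ((\<lambda>(x, y). gdist EG s x + gdist EH s' y) ` X)"
  unfolding setdist_def
proof (intro arg_cong[where f = Min] image_cong refl)
  fix p assume "p \<in> X"
  with assms show "gdist (cart_E EG EH) (s, s') p = (case p of (x, y) \<Rightarrow> gdist EG s x + gdist EH s' y)"
    by (cases p) (auto intro: gdist_cart_E)
qed

lemma setdist_cart_E_fibre:
  assumes "connected_graph VG EG" and "connected_graph VH EH"
    and "s \<in> VG" and "s' \<in> VH" and "v \<in> VH"
    and "X \<subseteq> VG" and "finite X" and "X \<noteq> {}"
  shows "setdist (cart_E EG EH) (s, s') (X \<times> {v}) = setdist EG s X + gdist EH s' v"
proof -
  have mono: "mono (\<lambda>n::nat. n + gdist EH s' v)" by (simp add: mono_def)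
  have "Min ((\<lambda>x. gdist EG s x + gdist EH s' v) ` X) = setdist EG s X + gdist EH s' v"
    using mono_Min_commute[OF mono, of "gdist EG s ` X"] assms(7,8)
    by (simp add: setdist_def image_image)
  moreover have "(\<lambda>(x, y). gdist EG s x + gdist EH s' y) ` (X \<times> {v})
      = (\<lambda>x. gdist EG s x + gdist EH s' v) ` X" by force
  ultimately show ?thesis using setdist_cart_E[OF assms(1-4), of "X \<times> {v}"] assms(5,6) by auto
qed

lemma setdist_cart_E_swap:
  "setdist (cart_E EH EG) (prod.swap s) (prod.swap ` X) = setdist (cart_E EG EH) s X"
  by (simp add: setdist_def image_image gdist_cart_E_swap)

lemma l_resolving_cart_swap:
  assumes S: "l_resolving (cart_V VG VH) (cart_E EG EH) l S"
  shows "l_resolving (cart_V VH VG) (cart_E EH EG) l (prod.swap ` S)"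
  unfolding l_resolving_def
proof (intro conjI allI impI)
  show "prod.swap ` S \<subseteq> cart_V VH VG"
    using S by (auto simp: l_resolving_def cart_V_def)
  fix X Y
  assume XY: "X \<subseteq> cart_V VH VG \<and> Y \<subseteq> cart_V VH VG \<and> X \<noteq> {} \<and> Y \<noteq> {}
    \<and> card X \<le> l \<and> card Y \<le> l \<and> X \<noteq> Y"
  then have "prod.swap ` X \<subseteq> cart_V VG VH" "prod.swap ` Y \<subseteq> cart_V VG VH"
    "prod.swap ` X \<noteq> {}" "prod.swap ` Y \<noteq> {}"
    "card (prod.swap ` X) \<le> l" "card (prod.swap ` Y) \<le> l" "prod.swap ` X \<noteq> prod.swap ` Y"
    by (auto simp: cart_V_def card_image inj_image_eq_iff)
  from l_resolvingD[OF S this] obtain s where s: "s \<in> S"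
    and "setdist (cart_E EG EH) s (prod.swap ` X) \<noteq> setdist (cart_E EG EH) s (prod.swap ` Y)"
    by blast
  then have "setdist (cart_E EH EG) (prod.swap s) X \<noteq> setdist (cart_E EH EG) (prod.swap s) Y"
    using setdist_cart_E_swap[of EH EG s "prod.swap ` X"]
      setdist_cart_E_swap[of EH EG s "prod.swap ` Y"]
    by (simp add: image_image)
  with s show "\<exists>s\<in>prod.swap ` S. setdist (cart_E EH EG) s X \<noteq> setdist (cart_E EH EG) s Y"
    by blast
qed

lemma l_resolving_fst_image:
  assumes "connected_graph VG EG" and "connected_graph VH EH" and "finite VG"
    and "v \<in> VH" and S: "l_resolving (cart_V VG VH) (cart_E EG EH) l S"
  shows "l_resolving VG EG l (fst ` S)"
  unfolding l_resolving_def
proof (intro conjI allI impI)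
  have SV: "S \<subseteq> VG \<times> VH" using S by (simp add: l_resolving_def cart_V_def)
  then show "fst ` S \<subseteq> VG" by auto
  fix X Y
  assume XY: "X \<subseteq> VG \<and> Y \<subseteq> VG \<and> X \<noteq> {} \<and> Y \<noteq> {} \<and> card X \<le> l \<and> card Y \<le> l \<and> X \<noteq> Y"
  then have "X \<times> {v} \<subseteq> cart_V VG VH" "Y \<times> {v} \<subseteq> cart_V VG VH" "X \<times> {v} \<noteq> {}"
    "Y \<times> {v} \<noteq> {}" "card (X \<times> {v}) \<le> l" "card (Y \<times> {v}) \<le> l" "X \<times> {v} \<noteq> Y \<times> {v}"
    using assms(4) by (auto simp: cart_V_def card_cartesian_product)
  from l_resolvingD[OF S this] obtain s s' where ss': "(s, s') \<in> S"
    and "setdist (cart_E EG EH) (s, s') (X \<times> {v}) \<noteq> setdist (cart_E EG EH) (s, s') (Y \<times> {v})"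
    by auto
  moreover have "s \<in> VG" "s' \<in> VH" using ss' SV by auto
  moreover have "finite X" "finite Y" using XY assms(3) finite_subset by auto
  ultimately have "setdist EG s X \<noteq> setdist EG s Y"
    using XY setdist_cart_E_fibre[OF assms(1,2) _ _ assms(4)] by simp
  then show "\<exists>s\<in>fst ` S. setdist EG s X \<noteq> setdist EG s Y"
    using ss' by force
qed

lemma l_resolving_snd_image:
  assumes "connected_graph VG EG" and "connected_graph VH EH" and "finite VH"
    and "u \<in> VG" and "l_resolving (cart_V VG VH) (cart_E EG EH) l S"
  shows "l_resolving VH EH l (snd ` S)"
proof -
  have "snd ` S = fst ` prod.swap ` S" by (simp add: image_image)
  then show ?thesis
    using l_resolving_fst_image[OF assms(2,1,3,4) l_resolving_cart_swap[OF assms(5)]] by simp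
qed

definition strictly_nearer :: "('a \<Rightarrow> 'a \<Rightarrow> bool) \<Rightarrow> 'a \<Rightarrow> 'a \<Rightarrow> 'a set \<Rightarrow> bool" where
  "strictly_nearer E s a Z \<longleftrightarrow> (\<forall>z\<in>Z. gdist E s a < gdist E s z)"

lemma strictly_nearer_subset:
  "strictly_nearer E s a Z \<Longrightarrow> Z' \<subseteq> Z \<Longrightarrow> strictly_nearer E s a Z'"
  unfolding strictly_nearer_def by blast

lemma strictly_nearer_if_setdist_insert:
  assumes "finite Z" and "Z \<noteq> {}" and "setdist E s (insert a Z) \<noteq> setdist E s Z"
  shows "strictly_nearer E s a Z"
proof -
  have "setdist E s (insert a Z) = min (gdist E s a) (setdist E s Z)"
    using assms(1,2) by (simp add: setdist_def)
  with assms(3) have "gdist E s a < setdist E s Z" by linarith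
  moreover have "setdist E s Z \<le> gdist E s z" if "z \<in> Z" for z
    using assms(1) that unfolding setdist_def by simp
  ultimately show ?thesis unfolding strictly_nearer_def by (auto intro: order.strict_trans2)
qed

lemma strictly_nearer_if_setdist_less:
  assumes "finite A" and "A \<noteq> {}" and "finite B" and "setdist E s A < setdist E s B"
  shows "\<exists>a\<in>A. strictly_nearer E s a B"
proof -
  have "setdist E s A \<in> gdist E s ` A"
    using assms(1,2) unfolding setdist_def by (intro Min_in) auto
  then obtain a where "a \<in> A" "gdist E s a = setdist E s A" by auto
  moreover have "setdist E s B \<le> gdist E s b" if "b \<in> B" for b
    using assms(3) that unfolding setdist_def by simp
  ultimately show ?thesis
    using assms(4) unfolding strictly_nearer_def by (metis order.strict_trans2)
qed

lemma setdist_less_if_strictly_nearer: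
  assumes "finite X" and "finite Y" and "Y \<noteq> {}" and "a \<in> X" and "strictly_nearer E s a Y"
  shows "setdist E s X < setdist E s Y"
proof -
  have "setdist E s X \<le> gdist E s a" using assms(1,4) by (simp add: setdist_def)
  also have "\<dots> < setdist E s Y"
    using assms(2,3,5) by (simp add: setdist_def strictly_nearer_def Min_gr_iff)
  finally show ?thesis .
qed

lemma l_solid_resolving_self:
  assumes "connected_graph V E" and "finite V"
  shows "l_solid_resolving V E l V"
  unfolding l_solid_resolving_def
proof (intro conjI allI impI)
  have less: "setdist E w A < setdist E w B"
    if "A \<subseteq> V" "B \<subseteq> V" "B \<noteq> {}" "w \<in> A" "w \<notin> B" for A B w
  proof (rule setdist_less_if_strictly_nearer)
    show "finite A" "finite B" using that(1,2) assms(2) finite_subset by auto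
    have "gdist E w w = 0" "gdist E w b \<noteq> 0" if "b \<in> B" for b
      using gdist_eq_0_iff[OF assms(1)] \<open>A \<subseteq> V\<close> \<open>B \<subseteq> V\<close> \<open>w \<in> A\<close> \<open>w \<notin> B\<close> that by auto
    then show "strictly_nearer E w w B" by (simp add: strictly_nearer_def)
  qed (use that in auto)
  show "V \<subseteq> V" ..
  fix X Y
  assume XY: "X \<subseteq> V \<and> Y \<subseteq> V \<and> X \<noteq> {} \<and> Y \<noteq> {} \<and> card X \<le> l \<and> X \<noteq> Y"
  then obtain w where "w \<in> X - Y \<or> w \<in> Y - X" by blast
  then show "\<exists>s\<in>V. setdist E s X \<noteq> setdist E s Y"
    using less[of X Y w] less[of Y X w] XY by (metis DiffE less_irrefl subsetD)
qed

lemma l_resolving_strictly_nearer: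
  assumes "l_resolving V E l S" and "S \<noteq> {}" and "finite V"
    and "A \<subseteq> V" and "a \<in> A" and "card A \<le> l"
  shows "\<exists>s\<in>S. strictly_nearer E s a (A - {a})"
proof (cases "A - {a} = {}")
  case True
  with assms(2) show ?thesis by (auto simp: strictly_nearer_def)
next
  case False
  have "finite A" using assms(3,4) finite_subset by blast
  then have "card (A - {a}) \<le> l" using assms(6) by (meson card_Diff1_le le_trans)
  moreover have "A - {a} \<subseteq> V" "A \<noteq> {}" "A \<noteq> A - {a}" using assms(4,5) by auto
  ultimately obtain s where "s \<in> S" "setdist E s A \<noteq> setdist E s (A - {a})"
    using l_resolvingD[OF assms(1,4) _ _ False assms(6)] by blast
  moreover have "insert a (A - {a}) = A" using assms(5) by blast
  ultimately show ?thesis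
    using strictly_nearer_if_setdist_insert[OF _ False] \<open>finite A\<close> by (metis finite_Diff)
qed

lemma l_solid_resolving_strictly_nearer:
  assumes "l_solid_resolving V E l S" and "S \<noteq> {}" and "finite V"
    and "b \<in> V" and "Z \<subseteq> V" and "card Z \<le> l" and "b \<notin> Z"
  shows "\<exists>s\<in>S. strictly_nearer E s b Z"
proof (cases "Z = {}")
  case True
  with assms(2) show ?thesis by (auto simp: strictly_nearer_def)
next
  case False
  have "finite Z" using assms(3,5) finite_subset by blast
  have "insert b Z \<subseteq> V" "Z \<noteq> insert b Z" using assms(4,5,7) by auto
  then obtain s where "s \<in> S" "setdist E s Z \<noteq> setdist E s (insert b Z)"
    using l_solid_resolvingD[OF assms(1,5) _ False _ assms(6)] by blast
  then show ?thesis
    using strictly_nearer_if_setdist_insert[OF \<open>finite Z\<close> False] by metis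
qed

lemma strictly_nearer_cart_E:
  assumes "connected_graph VG EG" and "connected_graph VH EH" and "s \<in> VG" and "s' \<in> VH"
    and "a \<in> VG" and "b \<in> VH" and "Y \<subseteq> VG \<times> VH" and "(a, b) \<notin> Y"
    and a: "strictly_nearer EG s a (fst ` Y - {a})" and b: "strictly_nearer EH s' b (snd ` Y - {b})"
  shows "strictly_nearer (cart_E EG EH) (s, s') (a, b) Y"
  unfolding strictly_nearer_def
proof
  fix q assume "q \<in> Y"
  then obtain x y where q: "q = (x, y)" "x \<in> VG" "y \<in> VH" "x \<in> fst ` Y" "y \<in> snd ` Y"
    using assms(7) by force
  have "gdist EG s a + gdist EH s' b < gdist EG s x + gdist EH s' y"
  proof (cases "x = a")
    case True
    then have "y \<noteq> b" using assms(8) \<open>q \<in> Y\<close> q(1) by auto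
    with True b q(5) show ?thesis by (simp add: strictly_nearer_def)
  next
    case False
    with a q(4) have "gdist EG s a < gdist EG s x" by (simp add: strictly_nearer_def)
    moreover have "gdist EH s' b \<le> gdist EH s' y"
      using b q(5) by (cases "y = b") (auto simp: strictly_nearer_def intro: less_imp_le)
    ultimately show ?thesis by simp
  qed
  with assms(1-6) q(1-3) show "gdist (cart_E EG EH) (s, s') (a, b) < gdist (cart_E EG EH) (s, s') q"
    by (simp add: gdist_cart_E)
qed

lemma strictly_nearer_pair_if_setdist_less:
  assumes "finite X" and "X \<noteq> {}" and "finite Y"
    and "setdist EG s (fst ` X) < setdist EG s (fst ` Y)"
  shows "\<exists>p\<in>X - Y. strictly_nearer EG s (fst p) (fst ` Y - {fst p})"
proof -
  obtain a where a: "a \<in> fst ` X" "strictly_nearer EG s a (fst ` Y)"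
    using strictly_nearer_if_setdist_less[OF _ _ _ assms(4)] assms(1-3) by blast
  then have "a \<notin> fst ` Y" by (auto simp: strictly_nearer_def)
  obtain p where "p \<in> X" "fst p = a" using a(1) by blast
  with a(2) \<open>a \<notin> fst ` Y\<close> show ?thesis
    by (intro bexI[of _ p]) (auto intro: strictly_nearer_subset)
qed

lemma strictly_nearer_pair_if_fst_eq:
  assumes "l_resolving VG EG l S" and "S \<noteq> {}" and "finite VG"
    and "X \<subseteq> VG \<times> VH" and "finite X" and "card X \<le> l" and "fst ` X = fst ` Y" and "p \<in> X"
  shows "\<exists>s\<in>S. strictly_nearer EG s (fst p) (fst ` Y - {fst p})"
proof -
  have "card (fst ` X) \<le> l" using assms(5,6) card_image_le le_trans by blast
  moreover have "fst ` X \<subseteq> VG" "fst p \<in> fst ` X" using assms(4,8) by auto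
  ultimately show ?thesis
    using l_resolving_strictly_nearer[OF assms(1-3)] assms(7) by metis
qed

lemma l_resolving_strictly_nearer_pair:
  assumes S: "l_resolving VG EG l S" "S \<noteq> {}" and "finite VG"
    and "X \<subseteq> VG \<times> VH" and "Y \<subseteq> VG \<times> VH" and "finite X" and "finite Y"
    and "X \<noteq> {}" and "Y \<noteq> {}" and "card X \<le> l" and "card Y \<le> l" and "X \<noteq> Y"
  shows "\<exists>s\<in>S. (\<exists>p\<in>X - Y. strictly_nearer EG s (fst p) (fst ` Y - {fst p}))
    \<or> (\<exists>p\<in>Y - X. strictly_nearer EG s (fst p) (fst ` X - {fst p}))"
proof (cases "fst ` X = fst ` Y")
  case True
  from \<open>X \<noteq> Y\<close> obtain p where "p \<in> X - Y \<or> p \<in> Y - X" by blast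
  then show ?thesis
  proof
    assume "p \<in> X - Y"
    with strictly_nearer_pair_if_fst_eq[OF S assms(3,4,6,10) True] show ?thesis by blast
  next
    assume "p \<in> Y - X"
    with strictly_nearer_pair_if_fst_eq[OF S assms(3,5,7,11) True[symmetric]] show ?thesis by blast
  qed
next
  case False
  have fst_XY: "fst ` X \<subseteq> VG" "fst ` Y \<subseteq> VG" "fst ` X \<noteq> {}" "fst ` Y \<noteq> {}"
    "card (fst ` X) \<le> l" "card (fst ` Y) \<le> l"
    using assms(4-11) card_image_le[of X fst] card_image_le[of Y fst] by auto
  from l_resolvingD[OF S(1) fst_XY False] obtain s
    where s: "s \<in> S" "setdist EG s (fst ` X) \<noteq> setdist EG s (fst ` Y)" by blast
  then consider "setdist EG s (fst ` X) < setdist EG s (fst ` Y)"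
    | "setdist EG s (fst ` Y) < setdist EG s (fst ` X)" by linarith
  then show ?thesis
  proof cases
    case 1
    with strictly_nearer_pair_if_setdist_less[OF assms(6,8,7)] s(1) show ?thesis by blast
  next
    case 2
    with strictly_nearer_pair_if_setdist_less[OF assms(7,9,6)] s(1) show ?thesis by blast
  qed
qed

lemma l_solid_resolving_setdist_cart_E_less:
  assumes "connected_graph VG EG" and "connected_graph VH EH" and "finite VH"
    and S': "l_solid_resolving VH EH l S'" "S' \<noteq> {}" and "s \<in> VG"
    and "X \<subseteq> VG \<times> VH" and "Y \<subseteq> VG \<times> VH" and "finite X" and "finite Y" and "Y \<noteq> {}"
    and "card Y \<le> l" and "p \<in> X - Y" and "strictly_nearer EG s (fst p) (fst ` Y - {fst p})"
  shows "\<exists>s'\<in>S'. setdist (cart_E EG EH) (s, s') X < setdist (cart_E EG EH) (s, s') Y"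
proof -
  have "card (snd ` Y - {snd p}) \<le> l"
    using assms(10,12) by (meson card_Diff1_le card_image_le finite_imageI le_trans)
  moreover have "snd p \<in> VH" "snd ` Y - {snd p} \<subseteq> VH" using assms(7,8,13) by auto
  ultimately obtain s' where s': "s' \<in> S'" "strictly_nearer EH s' (snd p) (snd ` Y - {snd p})"
    using l_solid_resolving_strictly_nearer[OF S' assms(3)] by blast
  moreover have "s' \<in> VH" using s'(1) S'(1) by (auto simp: l_solid_resolving_def)
  ultimately have "strictly_nearer (cart_E EG EH) (s, s') p Y"
    using strictly_nearer_cart_E[OF assms(1,2,6), of s' "fst p" "snd p" Y] assms(7,8,13,14) by auto
  with s'(1) show ?thesis
    using setdist_less_if_strictly_nearer[OF assms(9-11)] assms(13) by blast
qed

lemma l_resolving_times: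
  assumes G: "connected_graph VG EG" "finite VG" "card VG \<ge> 2"
    and H: "connected_graph VH EH" "finite VH" "card VH \<ge> 2" and "l \<ge> 1"
    and S: "l_resolving VG EG l S" and S': "l_solid_resolving VH EH l S'"
  shows "l_resolving (cart_V VG VH) (cart_E EG EH) l (S \<times> S')"
  unfolding l_resolving_def
proof (intro conjI allI impI)
  have "S \<subseteq> VG" "S' \<subseteq> VH" using S S' by (auto simp: l_resolving_def l_solid_resolving_def)
  then show "S \<times> S' \<subseteq> cart_V VG VH" by (auto simp: cart_V_def)
  have "S \<noteq> {}" "S' \<noteq> {}"
    using l_resolving_nonempty S l_solid_resolving_imp_l_resolving[OF S'] G(3) H(3) \<open>l \<ge> 1\<close>
    by blast+
  fix X Y
  assume "X \<subseteq> cart_V VG VH \<and> Y \<subseteq> cart_V VG VH \<and> X \<noteq> {} \<and> Y \<noteq> {}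
    \<and> card X \<le> l \<and> card Y \<le> l \<and> X \<noteq> Y"
  then have XY: "X \<subseteq> VG \<times> VH" "Y \<subseteq> VG \<times> VH" "X \<noteq> {}" "Y \<noteq> {}"
      "card X \<le> l" "card Y \<le> l" "X \<noteq> Y" and fin: "finite X" "finite Y"
    using G(2) H(2) finite_subset[of _ "VG \<times> VH"] by (auto simp: cart_V_def)
  have "s \<in> VG" if "s \<in> S" for s using that \<open>S \<subseteq> VG\<close> by blast
  note less = l_solid_resolving_setdist_cart_E_less[OF G(1) H(1,2) S' \<open>S' \<noteq> {}\<close> this]
  from l_resolving_strictly_nearer_pair[OF S \<open>S \<noteq> {}\<close> G(2) XY(1,2) fin XY(3-7)]
  obtain s where "s \<in> S" and
    "(\<exists>p\<in>X - Y. strictly_nearer EG s (fst p) (fst ` Y - {fst p}))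
      \<or> (\<exists>p\<in>Y - X. strictly_nearer EG s (fst p) (fst ` X - {fst p}))" by blast
  then obtain s' where "s' \<in> S'"
    and "setdist (cart_E EG EH) (s, s') X \<noteq> setdist (cart_E EG EH) (s, s') Y"
  proof (elim disjE bexE)
    fix p assume "p \<in> X - Y" "strictly_nearer EG s (fst p) (fst ` Y - {fst p})"
    from less[OF \<open>s \<in> S\<close> XY(1,2) fin XY(4,6) this] show thesis
      using that by (metis less_irrefl)
  next
    fix p assume "p \<in> Y - X" "strictly_nearer EG s (fst p) (fst ` X - {fst p})"
    from less[OF \<open>s \<in> S\<close> XY(2,1) fin(2,1) XY(3,5) this] show thesis
      using that by (metis less_irrefl)
  qed
  with \<open>s \<in> S\<close> show "\<exists>p\<in>S \<times> S'. setdist (cart_E EG EH) p X \<noteq> setdist (cart_E EG EH) p Y"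
    by blast
qed

lemma l_resolving_times_swap:
  assumes G: "connected_graph VG EG" "finite VG" "card VG \<ge> 2"
    and H: "connected_graph VH EH" "finite VH" "card VH \<ge> 2" and "l \<ge> 1"
    and S: "l_resolving VH EH l S" and S': "l_solid_resolving VG EG l S'"
  shows "l_resolving (cart_V VG VH) (cart_E EG EH) l (S' \<times> S)"
  using l_resolving_cart_swap[OF l_resolving_times[OF H G \<open>l \<ge> 1\<close> S S']]
  by (simp add: product_swap)

lemma beta_le_card: "l_resolving V E l S \<Longrightarrow> beta V E l \<le> card S"
  unfolding beta_def by (rule Least_le) blast

lemma beta_attained:
  "l_resolving V E l T \<Longrightarrow> \<exists>S. l_resolving V E l S \<and> card S = beta V E l"
  unfolding beta_def by (rule LeastI_ex) blast

lemma beta_s_attained: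
  "l_solid_resolving V E l T \<Longrightarrow> \<exists>S. l_solid_resolving V E l S \<and> card S = beta_s V E l"
  unfolding beta_s_def by (rule LeastI_ex) blast

lemma beta_le_beta_image:
  assumes "l_resolving V E l T" and "finite V"
    and "\<And>S. l_resolving V E l S \<Longrightarrow> l_resolving V' E' l (f ` S)"
  shows "beta V' E' l \<le> beta V E l"
proof -
  obtain S where S: "l_resolving V E l S" "card S = beta V E l"
    using beta_attained[OF assms(1)] by blast
  have "finite S" using S(1) assms(2) finite_subset by (auto simp: l_resolving_def)
  have "beta V' E' l \<le> card (f ` S)" using assms(3)[OF S(1)] by (rule beta_le_card)
  also have "\<dots> \<le> card S" using \<open>finite S\<close> by (rule card_image_le)
  finally show ?thesis using S(2) by simp
qed

lemma beta_le_mult: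
  assumes "l_resolving VA EA l A0" and "l_solid_resolving VB EB l B0"
    and "\<And>A B. l_resolving VA EA l A \<Longrightarrow> l_solid_resolving VB EB l B
      \<Longrightarrow> \<exists>R. l_resolving V E l R \<and> card R \<le> card A * card B"
  shows "beta V E l \<le> beta VA EA l * beta_s VB EB l"
proof -
  obtain A where A: "l_resolving VA EA l A" "card A = beta VA EA l"
    using beta_attained[OF assms(1)] by blast
  obtain B where B: "l_solid_resolving VB EB l B" "card B = beta_s VB EB l"
    using beta_s_attained[OF assms(2)] by blast
  from assms(3)[OF A(1) B(1)] obtain R where "l_resolving V E l R" "card R \<le> card A * card B"
    by blast
  with A(2) B(2) show ?thesis using beta_le_card[of V E l R] by simp
qed

theorem mainTheorem9:
  fixes VG :: "'a set" and EG :: "'a \<Rightarrow> 'a \<Rightarrow> bool"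
    and VH :: "'b set" and EH :: "'b \<Rightarrow> 'b \<Rightarrow> bool"
    and l :: nat
  assumes G: "simple_graph VG EG" "connected_graph VG EG" "nontrivial_graph VG"
    and H: "simple_graph VH EH" "connected_graph VH EH" "nontrivial_graph VH"
    and l: "l \<ge> 2"
  shows "(\<forall>S. l_resolving (cart_V VG VH) (cart_E EG EH) l S \<longrightarrow>
            l_resolving VG EG l (fst ` S) \<and> l_resolving VH EH l (snd ` S))
       \<and> (\<forall>S S'. l_resolving VG EG l S \<and> l_solid_resolving VH EH l S' \<longrightarrow>
            l_resolving (cart_V VG VH) (cart_E EG EH) l (S \<times> S'))
       \<and> (\<forall>S S'. l_resolving VH EH l S \<and> l_solid_resolving VG EG l S' \<longrightarrow>
            l_resolving (cart_V VG VH) (cart_E EG EH) l (S' \<times> S))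
       \<and> max (beta VG EG l) (beta VH EH l) \<le> beta (cart_V VG VH) (cart_E EG EH) l
       \<and> beta (cart_V VG VH) (cart_E EG EH) l
           \<le> min (beta VG EG l * beta_s VH EH l) (beta_s VG EG l * beta VH EH l)"
proof -
  have G': "finite VG" "card VG \<ge> 2" and H': "finite VH" "card VH \<ge> 2" and "l \<ge> 1"
    using G(1,3) H(1,3) l by (auto simp: simple_graph_def nontrivial_graph_def)
  then obtain u v where "u \<in> VG" "v \<in> VH" by fastforce
  note times = l_resolving_times[OF G(2) G' H(2) H' \<open>l \<ge> 1\<close>]
  note times_swap = l_resolving_times_swap[OF G(2) G' H(2) H' \<open>l \<ge> 1\<close>]
  note proj = l_resolving_fst_image[OF G(2) H(2) G'(1) \<open>v \<in> VH\<close>]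
    l_resolving_snd_image[OF G(2) H(2) H'(1) \<open>u \<in> VG\<close>]
  have solid: "l_solid_resolving VG EG l VG" "l_solid_resolving VH EH l VH"
    using l_solid_resolving_self G(2) G'(1) H(2) H'(1) by blast+
  note resolving = solid[THEN l_solid_resolving_imp_l_resolving]
  have "finite (cart_V VG VH)" using G'(1) H'(1) by (simp add: cart_V_def)
  note beta_le_beta_image[OF times[OF resolving(1) solid(2)] this]
  then have "beta VG EG l \<le> beta (cart_V VG VH) (cart_E EG EH) l"
    "beta VH EH l \<le> beta (cart_V VG VH) (cart_E EG EH) l"
    using proj by blast+
  moreover have "beta (cart_V VG VH) (cart_E EG EH) l \<le> beta VG EG l * beta_s VH EH l"
    by (rule beta_le_mult[OF resolving(1) solid(2)]) (metis times card_cartesian_product order.refl)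
  moreover have "beta (cart_V VG VH) (cart_E EG EH) l \<le> beta VH EH l * beta_s VG EG l"
    by (rule beta_le_mult[OF resolving(2) solid(1)])
      (metis times_swap card_cartesian_product mult.commute order.refl)
  ultimately show ?thesis using proj times times_swap by (auto simp: mult.commute)
qed

end
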